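(* Let $X$ be a subshift over a finite alphabet such that (i) there is $N$ such that every right special factor $w$ of $\mathcal{L}(X)$ with $|w|\ge N$ admits a letter $c$ such that $wc$ is right special in $\mathcal{L}(X)$; and (ii) right special words are dense in $X$: for every $\mathbf{x}\in X$ and every $n$, some right special factor of $\mathcal{L}(X)$ has $\mathbf{x}[0,n-1]$ as a prefix. Then the winning shift $W(X)$ has infinite coding dimension.
   Context: Subshifts are one-sided closed shift-invariant subsets of $A^{\mathbb{N}}$; $\mathcal{L}(X)$ is the set of finite factors of elements of $X$. A word $w\in\mathcal{L}(X)$ is right special if $wa,wb\in\mathcal{L}(X)$ for two distinct letters $a,b$. Winning shift: for a choice sequence $\alpha=\alpha_0\alpha_1\cdots\in\{0,\dots,|A|-1\}^{\mathbb{N}}$, Alice and Bob play infinitely many rounds; in round $j$ Alice chooses $A_j\subseteq A$ with $|A_j|=\alpha_j+1$ and Bob chooses $a_j\in A_j$; Alice wins if $a_0a_1\cdots\in X$. $W(X)$ is the set of $\alpha$ for which Alice has a winning strategy. Infinite coding dimension: there is no $d$ with $\sum_i y_i\le d$ for all $\mathbf{y}\in W(X)$. *)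

theory Defs
  imports Main
begin

text \<open>A subshift over the finite alphabet A: a nonempty set of A-valued sequences that is
closed in the product topology (written out via cylinders: a sequence all of whose prefixes
are prefixes of elements of X belongs to X) and invariant under the shift.\<close>
definition subshift :: "'a set \<Rightarrow> (nat \<Rightarrow> 'a) set \<Rightarrow> bool" where
  "subshift A X \<longleftrightarrow>
     finite A \<and> X \<noteq> {} \<and>
     (\<forall>x\<in>X. \<forall>i. x i \<in> A) \<and>
     (\<forall>x. (\<forall>n. \<exists>y\<in>X. \<forall>i<n. y i = x i) \<longrightarrow> x \<in> X) \<and>
     (\<forall>x\<in>X. (\<lambda>i. x (Suc i)) \<in> X)"

definition lang :: "(nat \<Rightarrow> 'a) set \<Rightarrow> 'a list set" where
  "lang X = {w. \<exists>x\<in>X. \<exists>k. w = map x [k..<k + length w]}"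

definition right_special :: "(nat \<Rightarrow> 'a) set \<Rightarrow> 'a list \<Rightarrow> bool" where
  "right_special X w \<longleftrightarrow> (\<exists>a b. a \<noteq> b \<and> w @ [a] \<in> lang X \<and> w @ [b] \<in> lang X)"

text \<open>Winning shift: alpha is a choice sequence with values in {0,...,|A|-1}; Alice's strategy
maps the history of Bob's previous letters to a subset of A of size alpha_j + 1; she wins
if every play consistent with her strategy lies in X.\<close>
definition winning_shift :: "'a set \<Rightarrow> (nat \<Rightarrow> 'a) set \<Rightarrow> (nat \<Rightarrow> nat) set" where
  "winning_shift A X =
     {\<alpha>. (\<forall>i. \<alpha> i < card A) \<and>
          (\<exists>\<sigma> :: 'a list \<Rightarrow> 'a set.
             (\<forall>h. \<sigma> h \<subseteq> A \<and> card (\<sigma> h) = \<alpha> (length h) + 1) \<and>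
             (\<forall>a. (\<forall>j. a j \<in> \<sigma> (map a [0..<j])) \<longrightarrow> a \<in> X))}"

text \<open>Infinite coding dimension: no d bounds the sums of all elements of W (sums of
nonnegative integers, expressed through partial sums).\<close>
definition infinite_coding_dimension :: "(nat \<Rightarrow> nat) set \<Rightarrow> bool" where
  "infinite_coding_dimension W \<longleftrightarrow> \<not> (\<exists>d::nat. \<forall>y\<in>W. \<forall>n. (\<Sum>i<n. y i) \<le> d)"

end

(* Call a right special word long if its length is at least N; by (i) every long right special
   word extends to long right special words of every greater length. By (ii), and since only
   finitely many words of a given length L occur, there is a horizon beyond which every word
   of length L extends to a long right special word of any prescribed length. Choosing levels
   each beyond the horizon of the previous one plus one, Alice keeps the play inside the tree
   of words that pass through long right special words at every level: at a level she offers
   the two letters that follow the right special word, elsewhere a single letter. Every play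
   then has all its prefixes in the language, so it lies in the closed set X, and the
   choice sequence has a one at each of the infinitely many levels. *)

theory Submission
  imports Defs "HOL-Library.Sublist"
begin

lemma lang_prefix:
  assumes "prefix u w" "w \<in> lang X"
  shows "u \<in> lang X"
proof -
  obtain x k where x: "x \<in> X" "w = map x [k..<k + length w]"
    using assms(2) unfolding lang_def by blast
  have "length u \<le> length w" using assms(1) by (rule prefix_length_le)
  moreover have "u = take (length u) (map x [k..<k + length w])"
    using assms(1) x(2) by (metis append_eq_conv_conj prefix_def)
  ultimately have "u = map x [k..<k + length u]" by (simp add: take_map take_upt)
  then show ?thesis using x(1) unfolding lang_def by blast
qed

lemma lang_letters:
  assumes "subshift A X" "w \<in> lang X"
  shows "set w \<subseteq> A"
proof -
  obtain x k where x: "x \<in> X" "w = map x [k..<k + length w]"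
    using assms(2) unfolding lang_def by blast
  then have "set w = x ` set [k..<k + length w]" by (metis set_map)
  then show ?thesis using assms(1) x(1) unfolding subshift_def by auto
qed

lemma subshift_shift_iterate:
  assumes "subshift A X" "x \<in> X"
  shows "(\<lambda>i. x (i + k)) \<in> X"
proof (induction k)
  case 0
  then show ?case using assms(2) by simp
next
  case (Suc k)
  then have "(\<lambda>i. x (Suc i + k)) \<in> X" using assms(1) unfolding subshift_def by auto
  then show ?case by simp
qed

lemma lang_imp_initial_segment:
  assumes "subshift A X" "w \<in> lang X"
  shows "\<exists>y\<in>X. map y [0..<length w] = w"
proof -
  obtain x k where x: "x \<in> X" "w = map x [k..<k + length w]"
    using assms(2) unfolding lang_def by blast
  have "map (\<lambda>i. x (i + k)) [0..<length w] = map x [k..<k + length w]"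
    by (intro nth_equalityI) (auto simp: add.commute)
  then show ?thesis using subshift_shift_iterate[OF assms(1) x(1)] x(2) by metis
qed

lemma subshift_memI:
  assumes "subshift A X" "\<And>n. map x [0..<n] \<in> lang X"
  shows "x \<in> X"
proof -
  have "\<exists>y\<in>X. \<forall>i<n. y i = x i" for n
  proof -
    obtain y where "y \<in> X" "map y [0..<n] = map x [0..<n]"
      using lang_imp_initial_segment[OF assms(1) assms(2)[of n]] by auto
    then have "\<forall>i<n. y i = x i" by (simp add: map_eq_conv)
    with \<open>y \<in> X\<close> show ?thesis by blast
  qed
  then show ?thesis using assms(1) unfolding subshift_def by blast
qed

text \<open>At a history h in R, Alice's strategy offers the letters B that keep the play in R.\<close>
definition winning_tree :: "(nat \<Rightarrow> 'a) set \<Rightarrow> (nat \<Rightarrow> nat) \<Rightarrow> 'a list set \<Rightarrow> bool" where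
  "winning_tree X \<alpha> R \<longleftrightarrow> [] \<in> R \<and> R \<subseteq> lang X \<and>
     (\<forall>h\<in>R. \<exists>B. card B = \<alpha> (length h) + 1 \<and> (\<forall>a\<in>B. h @ [a] \<in> R))"

lemma winning_tree_has_length:
  assumes "winning_tree X \<alpha> R"
  shows "\<exists>h\<in>R. length h = n"
proof (induction n)
  case 0
  then show ?case using assms unfolding winning_tree_def by auto
next
  case (Suc n)
  then obtain h where "h \<in> R" "length h = n" by blast
  moreover obtain B where "card B = \<alpha> n + 1" "\<forall>a\<in>B. h @ [a] \<in> R"
    using assms \<open>h \<in> R\<close> \<open>length h = n\<close> unfolding winning_tree_def by blast
  moreover obtain a where "a \<in> B" using \<open>card B = \<alpha> n + 1\<close> by fastforce
  ultimately show ?case by (intro bexI[of _ "h @ [a]"]) auto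
qed

lemma winning_tree_imp_winning_shift:
  assumes X: "subshift A X" and R: "winning_tree X \<alpha> R"
  shows "\<alpha> \<in> winning_shift A X"
proof -
  obtain B where B: "\<And>h. h \<in> R \<Longrightarrow> card (B h) = \<alpha> (length h) + 1 \<and> (\<forall>a\<in>B h. h @ [a] \<in> R)"
    using R unfolding winning_tree_def by metis
  have finA: "finite A" using X unfolding subshift_def by blast
  have B_sub: "B h \<subseteq> A" if "h \<in> R" for h
    using B[OF that] R lang_letters[OF X] unfolding winning_tree_def by fastforce
  have \<alpha>_less: "\<alpha> i < card A" for i
  proof -
    obtain h where "h \<in> R" "length h = i" using winning_tree_has_length[OF R] by blast
    then show ?thesis using B card_mono[OF finA B_sub] by fastforce
  qed
  define \<sigma> where "\<sigma> h = (if h \<in> R then B h else (SOME C. C \<subseteq> A \<and> card C = \<alpha> (length h) + 1))"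
    for h
  have \<sigma>: "\<sigma> h \<subseteq> A \<and> card (\<sigma> h) = \<alpha> (length h) + 1" for h
  proof (cases "h \<in> R")
    case True
    then show ?thesis using B B_sub unfolding \<sigma>_def by simp
  next
    case False
    have "\<alpha> (length h) + 1 \<le> card A" using \<alpha>_less Suc_le_eq by simp
    then have "\<exists>C. C \<subseteq> A \<and> card C = \<alpha> (length h) + 1"
      by (meson obtain_subset_with_card_n)
    then show ?thesis using False someI_ex unfolding \<sigma>_def by (simp add: someI_ex)
  qed
  have wins: "a \<in> X" if play: "\<forall>j. a j \<in> \<sigma> (map a [0..<j])" for a
  proof -
    have "map a [0..<n] \<in> R" for n
    proof (induction n)
      case 0
      then show ?case using R unfolding winning_tree_def by simp
    next
      case (Suc n)
      then have "a n \<in> B (map a [0..<n])" using play unfolding \<sigma>_def by metis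
      then show ?case using B[OF Suc] by simp
    qed
    then show "a \<in> X" using R subshift_memI[OF X] unfolding winning_tree_def by blast
  qed
  have "\<exists>\<sigma>. (\<forall>h. \<sigma> h \<subseteq> A \<and> card (\<sigma> h) = \<alpha> (length h) + 1) \<and>
      (\<forall>a. (\<forall>j. a j \<in> \<sigma> (map a [0..<j])) \<longrightarrow> a \<in> X)"
    using \<sigma> wins by blast
  then show ?thesis unfolding winning_shift_def using \<alpha>_less by blast
qed

locale dense_special_subshift =
  fixes A :: "'a set" and X :: "(nat \<Rightarrow> 'a) set" and N :: nat
  assumes subshift: "subshift A X"
    and right_special_extends:
      "\<And>w. right_special X w \<Longrightarrow> N \<le> length w \<Longrightarrow> \<exists>c. right_special X (w @ [c])"
    and right_special_dense: "\<And>x n. x \<in> X \<Longrightarrow> \<exists>w. right_special X w \<and> prefix (map x [0..<n]) w"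
begin

definition long_special :: "'a list \<Rightarrow> bool" where
  "long_special w \<longleftrightarrow> right_special X w \<and> N \<le> length w"

lemma long_special_in_lang: "long_special w \<Longrightarrow> w \<in> lang X"
  unfolding long_special_def right_special_def by (blast intro: lang_prefix prefixI)

lemma long_special_extend:
  assumes "long_special w"
  shows "\<exists>v. length v = k \<and> long_special (w @ v)"
proof (induction k)
  case 0
  then show ?case using assms by simp
next
  case (Suc k)
  then obtain v where v: "length v = k" "long_special (w @ v)" by blast
  then obtain c where "right_special X (w @ v @ [c])"
    using right_special_extends unfolding long_special_def by fastforce
  with v show ?case unfolding long_special_def by (intro exI[of _ "v @ [c]"]) auto
qed

lemma long_special_continuation:
  assumes "u \<in> lang X"
  shows "\<exists>v. long_special (u @ v)"
proof -
  obtain y where y: "y \<in> X" "map y [0..<length u] = u"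
    using lang_imp_initial_segment[OF subshift assms] by blast
  obtain w where w: "right_special X w" "prefix (map y [0..<length u + N]) w"
    using right_special_dense[OF y(1)] by blast
  have "map y [0..<length u + N] = u @ map y [length u..<length u + N]"
    using y(2) by (simp add: upt_add_eq_append[of 0 "length u" N])
  then have "prefix u w" "N \<le> length w"
    using w(2) prefix_length_le[OF w(2)] by (auto intro: append_prefixD)
  then show ?thesis using w(1) unfolding long_special_def by (auto simp: prefix_def)
qed

lemma eventually_long_special_continuation:
  assumes "u \<in> lang X"
  shows "\<forall>\<^sub>F m in sequentially. \<exists>v. long_special (u @ v) \<and> length (u @ v) = m"
proof -
  obtain v where v: "long_special (u @ v)" using long_special_continuation[OF assms] by blast
  have "\<exists>v. long_special (u @ v) \<and> length (u @ v) = m" if "length (u @ v) \<le> m" for m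
  proof -
    obtain v' where "length v' = m - length (u @ v)" "long_special ((u @ v) @ v')"
      using long_special_extend[OF v] by blast
    with that show ?thesis by (intro exI[of _ "v @ v'"]) auto
  qed
  then show ?thesis unfolding eventually_sequentially by blast
qed

lemma uniform_long_special_continuation:
  "\<exists>M. L \<le> M \<and> (\<forall>m\<ge>M. \<forall>u\<in>lang X. length u = L \<longrightarrow>
     (\<exists>v. long_special (u @ v) \<and> length (u @ v) = m))"
proof -
  have "finite A" using subshift unfolding subshift_def by blast
  moreover have "{u \<in> lang X. length u = L} \<subseteq> {u. set u \<subseteq> A \<and> length u = L}"
    using lang_letters[OF subshift] by blast
  ultimately have "finite {u \<in> lang X. length u = L}"
    using finite_lists_length_eq finite_subset by blast
  then have "\<forall>\<^sub>F m in sequentially. \<forall>u\<in>{u \<in> lang X. length u = L}.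
      \<exists>v. long_special (u @ v) \<and> length (u @ v) = m"
    by (rule eventually_ball_finite) (use eventually_long_special_continuation in blast)
  then have "\<forall>\<^sub>F m in sequentially. L \<le> m \<and> (\<forall>u\<in>{u \<in> lang X. length u = L}.
      \<exists>v. long_special (u @ v) \<and> length (u @ v) = m)"
    by (intro eventually_conj eventually_ge_at_top)
  then show ?thesis unfolding eventually_sequentially by (metis (lifting) le_refl mem_Collect_eq)
qed

definition special_horizon :: "nat \<Rightarrow> nat" where
  "special_horizon L = (SOME M. L \<le> M \<and> (\<forall>m\<ge>M. \<forall>u\<in>lang X. length u = L \<longrightarrow>
     (\<exists>v. long_special (u @ v) \<and> length (u @ v) = m)))"

lemma special_horizon:
  "L \<le> special_horizon L \<and> (\<forall>m\<ge>special_horizon L. \<forall>u\<in>lang X. length u = L \<longrightarrow>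
     (\<exists>v. long_special (u @ v) \<and> length (u @ v) = m))"
  unfolding special_horizon_def by (rule someI_ex[OF uniform_long_special_continuation])

fun branch_level :: "nat \<Rightarrow> nat" where
  "branch_level 0 = special_horizon 0"
| "branch_level (Suc k) = special_horizon (Suc (branch_level k))"

lemma strict_mono_branch_level: "strict_mono branch_level"
  unfolding strict_mono_Suc_iff
proof
  fix k
  have "Suc (branch_level k) \<le> special_horizon (Suc (branch_level k))"
    using special_horizon by blast
  then show "branch_level k < branch_level (Suc k)" by simp
qed

definition on_track :: "nat \<Rightarrow> 'a list \<Rightarrow> bool" where
  "on_track m h \<longleftrightarrow> (\<exists>w. long_special w \<and> length w = m \<and> (prefix h w \<or> prefix w h))"

lemma on_track_snoc:
  assumes "on_track m h" "m \<le> length h"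
  shows "on_track m (h @ [c])"
proof -
  obtain w where w: "long_special w" "length w = m" "prefix h w \<or> prefix w h"
    using assms(1) unfolding on_track_def by blast
  then have "prefix w h" using assms(2) by (auto simp: prefix_def)
  with w show ?thesis unfolding on_track_def by auto
qed

lemma on_track_length: "on_track (length h) h \<Longrightarrow> long_special h"
  unfolding on_track_def prefix_def by auto

lemma on_track_prefix:
  assumes "long_special w" "length w \<le> m" "prefix u w"
  shows "on_track m u"
proof -
  obtain v where "length v = m - length w" "long_special (w @ v)"
    using long_special_extend[OF assms(1)] by blast
  moreover have "prefix u (w @ v)" using assms(3) by (auto simp: prefix_def)
  ultimately show ?thesis using assms(2) unfolding on_track_def by (intro exI[of _ "w @ v"]) auto
qed

lemma on_track_horizon:
  assumes "u \<in> lang X" "special_horizon (length u) \<le> m"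
  shows "on_track m u"
proof -
  obtain v where "long_special (u @ v)" "length (u @ v) = m"
    using special_horizon assms by blast
  then show ?thesis unfolding on_track_def by (intro exI[of _ "u @ v"]) auto
qed

definition special_tree :: "'a list set" where
  "special_tree = {h \<in> lang X. \<forall>k. on_track (branch_level k) h}"

lemma Nil_in_special_tree: "[] \<in> special_tree"
proof -
  obtain x where "x \<in> X" using subshift unfolding subshift_def by blast
  then have "[] \<in> lang X" unfolding lang_def by auto
  moreover have "special_horizon 0 \<le> branch_level k" for k
    using strict_mono_less_eq[OF strict_mono_branch_level, of 0 k] by simp
  ultimately show ?thesis unfolding special_tree_def using on_track_horizon by fastforce
qed

lemma special_tree_branch:
  assumes h: "h \<in> special_tree" and k: "length h = branch_level k"
  shows "\<exists>a b. a \<noteq> b \<and> h @ [a] \<in> special_tree \<and> h @ [b] \<in> special_tree"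
proof -
  have "long_special h" using h k on_track_length unfolding special_tree_def by fastforce
  then obtain a b where ab: "a \<noteq> b" "h @ [a] \<in> lang X" "h @ [b] \<in> lang X"
    unfolding long_special_def right_special_def by blast
  have "h @ [c] \<in> special_tree" if c: "h @ [c] \<in> lang X" for c
  proof -
    have "on_track (branch_level j) (h @ [c])" for j
    proof (cases "j \<le> k")
      case True
      then have "branch_level j \<le> length h"
        using k strict_mono_less_eq[OF strict_mono_branch_level] by simp
      then show ?thesis using h on_track_snoc unfolding special_tree_def by blast
    next
      case False
      then have "Suc k \<le> j" by simp
      then have "branch_level (Suc k) \<le> branch_level j"
        using strict_mono_less_eq[OF strict_mono_branch_level] by blast
      then show ?thesis using c k by (intro on_track_horizon) auto
    qed
    with c show ?thesis unfolding special_tree_def by blast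
  qed
  with ab show ?thesis by blast
qed

lemma special_tree_continue:
  assumes h: "h \<in> special_tree" and not_level: "length h \<notin> range branch_level"
  shows "\<exists>c. h @ [c] \<in> special_tree"
proof -
  define k where "k = (LEAST k. length h < branch_level k)"
  have "length h \<le> branch_level (length h)"
    using strict_mono_imp_increasing[OF strict_mono_branch_level] .
  then have "length h < branch_level (length h)" using not_level le_neq_implies_less by blast
  then have k_above: "length h < branch_level k"
    and k_least: "\<And>j. length h < branch_level j \<Longrightarrow> k \<le> j"
    unfolding k_def by (auto intro: LeastI Least_le)
  obtain w where w: "long_special w" "length w = branch_level k" "prefix h w \<or> prefix w h"
    using h unfolding special_tree_def on_track_def by blast
  then have "prefix h w" using k_above prefix_length_le by fastforce
  define c where "c = w ! length h"
  have "take (Suc (length h)) w = h @ [c]"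
    using \<open>prefix h w\<close> k_above w(2) unfolding c_def prefix_def
    by (auto simp: take_Suc_conv_app_nth)
  then have hc: "prefix (h @ [c]) w" by (metis take_is_prefix)
  have "on_track (branch_level j) (h @ [c])" for j
  proof (cases "branch_level j \<le> length h")
    case True
    then show ?thesis using h on_track_snoc unfolding special_tree_def by blast
  next
    case False
    then have "length w \<le> branch_level j"
      using k_least w(2) strict_mono_less_eq[OF strict_mono_branch_level] by simp
    then show ?thesis using on_track_prefix w(1) hc by blast
  qed
  moreover have "h @ [c] \<in> lang X" using hc long_special_in_lang[OF w(1)] lang_prefix by blast
  ultimately show ?thesis unfolding special_tree_def by blast
qed

definition branching :: "nat \<Rightarrow> nat" where
  "branching i = of_bool (i \<in> range branch_level)"

lemma winning_tree_special_tree: "winning_tree X branching special_tree"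
  unfolding winning_tree_def
proof (intro conjI ballI)
  show "special_tree \<subseteq> lang X" unfolding special_tree_def by blast
next
  fix h assume h: "h \<in> special_tree"
  show "\<exists>B. card B = branching (length h) + 1 \<and> (\<forall>a\<in>B. h @ [a] \<in> special_tree)"
  proof (cases "length h \<in> range branch_level")
    case True
    then obtain a b where "a \<noteq> b" "h @ [a] \<in> special_tree" "h @ [b] \<in> special_tree"
      using special_tree_branch[OF h] by blast
    with True show ?thesis unfolding branching_def by (intro exI[of _ "{a, b}"]) auto
  next
    case False
    then obtain c where "h @ [c] \<in> special_tree" using special_tree_continue[OF h] by blast
    with False show ?thesis unfolding branching_def by (intro exI[of _ "{c}"]) auto
  qed
qed (rule Nil_in_special_tree)

end

lemma sum_of_bool_range_strict_mono:
  fixes f :: "nat \<Rightarrow> nat"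
  assumes "strict_mono f"
  shows "d < (\<Sum>i<Suc (f d). of_bool (i \<in> range f) :: nat)"
proof -
  have "f ` {..d} \<subseteq> {..<Suc (f d)} \<inter> {i. i \<in> range f}"
    using strict_mono_less_eq[OF assms] by (auto simp: less_Suc_eq_le)
  then have "card (f ` {..d}) \<le> card ({..<Suc (f d)} \<inter> {i. i \<in> range f})"
    by (intro card_mono) auto
  moreover have "card (f ` {..d}) = Suc d"
    using strict_mono_imp_inj_on[OF assms] by (simp add: card_image)
  moreover have "(\<Sum>i<Suc (f d). of_bool (i \<in> range f) :: nat) =
      card ({..<Suc (f d)} \<inter> {i. i \<in> range f})"
    by (metis finite_lessThan of_nat_id sum_of_bool_eq)
  ultimately show ?thesis by linarith
qed

theorem mainTheorem7:
  fixes A :: "'a set" and X :: "(nat \<Rightarrow> 'a) set"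
  assumes "subshift A X"
    and "\<exists>N. \<forall>w. right_special X w \<and> length w \<ge> N \<longrightarrow> (\<exists>c. right_special X (w @ [c]))"
    and "\<forall>x\<in>X. \<forall>n. \<exists>w. right_special X w \<and> (\<exists>v. w = map x [0..<n] @ v)"
  shows "infinite_coding_dimension (winning_shift A X)"
proof -
  obtain N where "\<forall>w. right_special X w \<and> length w \<ge> N \<longrightarrow> (\<exists>c. right_special X (w @ [c]))"
    using assms(2) by blast
  then interpret dense_special_subshift A X N
    using assms(1,3) by unfold_locales (auto simp: prefix_def)
  have winning: "branching \<in> winning_shift A X"
    using winning_tree_imp_winning_shift[OF subshift winning_tree_special_tree] .
  have "d < (\<Sum>i<Suc (branch_level d). branching i)" for d
    unfolding branching_def by (rule sum_of_bool_range_strict_mono[OF strict_mono_branch_level])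
  then show ?thesis
    unfolding infinite_coding_dimension_def using winning not_le by blast
qed

end
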